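(* Every quasi-normal operator $T\in\mathcal{L}(\mathcal{H})$ with closed range is an SD operator.
   Context: $\mathcal{H}$ is a Hilbert space, $\mathcal{L}(\mathcal{H})$ the bounded operators on it. $T$ is quasi-normal if $T$ commutes with $T^*T$. For $T$ with closed range, $T^\dagger$ is its Moore–Penrose inverse (unique solution of $TT^\dagger T=T$, $T^\dagger TT^\dagger=T^\dagger$, $(T^\dagger T)^*=T^\dagger T$, $(TT^\dagger)^*=TT^\dagger$). $T$ is SD if it has closed range and $T^*T^\dagger=T^\dagger T^*$. *)

theory Defs
  imports "HOL-Analysis.Analysis"
begin

text \<open>Complex inner product spaces and complex Hilbert spaces (not in the distribution).
  The inner product is conjugate-linear in the first argument.\<close>

class complex_inner = real_normed_vector +
  fixes scaleC :: "complex \<Rightarrow> 'a \<Rightarrow> 'a" (infixr \<open>*\<^sub>C\<close> 75)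
    and cinner :: "'a \<Rightarrow> 'a \<Rightarrow> complex"
  assumes scaleC_add_right: "c *\<^sub>C (x + y) = c *\<^sub>C x + c *\<^sub>C y"
    and scaleC_add_left: "(a + b) *\<^sub>C x = a *\<^sub>C x + b *\<^sub>C x"
    and scaleC_scaleC: "a *\<^sub>C (b *\<^sub>C x) = (a * b) *\<^sub>C x"
    and scaleC_one: "1 *\<^sub>C x = x"
    and scaleR_scaleC: "scaleR r x = complex_of_real r *\<^sub>C x"
    and cinner_commute: "cinner x y = cnj (cinner y x)"
    and cinner_add_left: "cinner (x + y) z = cinner x z + cinner y z"
    and cinner_scaleC_left: "cinner (c *\<^sub>C x) y = cnj c * cinner x y"
    and cinner_self_real: "Im (cinner x x) = 0"
    and cinner_self_nonneg: "0 \<le> Re (cinner x x)"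
    and cinner_eq_zero_iff: "cinner x x = 0 \<longleftrightarrow> x = 0"
    and norm_eq_sqrt_cinner: "norm x = sqrt (Re (cinner x x))"

class chilbert_space = complex_inner + complete_space

definition clinear :: "('a::complex_inner \<Rightarrow> 'b::complex_inner) \<Rightarrow> bool" where
  "clinear f \<longleftrightarrow> (\<forall>x y. f (x + y) = f x + f y) \<and> (\<forall>c x. f (c *\<^sub>C x) = c *\<^sub>C f x)"

definition bounded_clinear :: "('a::complex_inner \<Rightarrow> 'b::complex_inner) \<Rightarrow> bool" where
  "bounded_clinear f \<longleftrightarrow> clinear f \<and> (\<exists>K. \<forall>x. norm (f x) \<le> norm x * K)"

definition adj :: "('a::chilbert_space \<Rightarrow> 'a) \<Rightarrow> ('a \<Rightarrow> 'a)" where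
  "adj T = (THE S. \<forall>x y. cinner (T x) y = cinner x (S y))"

definition is_mp_inverse :: "('a::chilbert_space \<Rightarrow> 'a) \<Rightarrow> ('a \<Rightarrow> 'a) \<Rightarrow> bool" where
  "is_mp_inverse T S \<longleftrightarrow> bounded_clinear S \<and> T \<circ> S \<circ> T = T \<and> S \<circ> T \<circ> S = S
     \<and> adj (S \<circ> T) = S \<circ> T \<and> adj (T \<circ> S) = T \<circ> S"

definition mp_inverse :: "('a::chilbert_space \<Rightarrow> 'a) \<Rightarrow> ('a \<Rightarrow> 'a)" where
  "mp_inverse T = (THE S. is_mp_inverse T S)"

definition quasi_normal :: "('a::chilbert_space \<Rightarrow> 'a) \<Rightarrow> bool" where
  "quasi_normal T \<longleftrightarrow> T \<circ> (adj T \<circ> T) = (adj T \<circ> T) \<circ> T"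

definition SD :: "('a::chilbert_space \<Rightarrow> 'a) \<Rightarrow> bool" where
  "SD T \<longleftrightarrow> closed (range T) \<and> adj T \<circ> mp_inverse T = mp_inverse T \<circ> adj T"

end

theory Submission
  imports Defs
begin

(*
  Let P be the orthogonal projection onto the closed range R(T). The Moore-Penrose inverse
  maps y to the unique x orthogonal to ker T with T x = P y. As T^* x lies in the range of T^*,
  which is orthogonal to ker T, the identity T^+ T^* y = T^* T^+ y reduces to T T^* x - T^* y being
  orthogonal to R(T) for x = T^+ y, and this is where quasi-normality enters: for every v,
    <T^* y, T v> = <P y, T T v> = <x, T^* T T v> = <x, T T^* T v> = <T T^* x, T v>.
  The rest is standard Hilbert space theory: the projection theorem, the Riesz representation
  (hence the adjoint), and, for the boundedness of T^+, the closed range theorem, obtained from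
  the uniform boundedness principle via Baire's theorem.
*)

lemma scaleC_zero_right [simp]: "c *\<^sub>C 0 = 0"
  using scaleC_add_right[of c 0 0] by simp

lemma scaleC_minus_right: "c *\<^sub>C (- x) = - (c *\<^sub>C x)"
  by (metis add.right_inverse add_eq_0_iff scaleC_add_right scaleC_zero_right)

lemma scaleC_diff_right: "c *\<^sub>C (x - y) = c *\<^sub>C x - c *\<^sub>C y"
  using scaleC_add_right[of c x "- y"] by (simp add: scaleC_minus_right)

lemma cinner_zero_left [simp]: "cinner 0 y = 0"
  using cinner_add_left[of 0 0 y] by simp

lemma cinner_zero_right [simp]: "cinner x 0 = 0"
  by (metis cinner_commute cinner_zero_left complex_cnj_zero)

lemma cinner_add_right: "cinner x (y + z) = cinner x y + cinner x z"
  by (metis cinner_add_left cinner_commute complex_cnj_add)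

lemma cinner_scaleC_right: "cinner x (c *\<^sub>C y) = c * cinner x y"
  by (metis cinner_commute cinner_scaleC_left complex_cnj_cnj complex_cnj_mult)

lemma cinner_scaleR_right: "cinner x (r *\<^sub>R y) = of_real r * cinner x y"
  by (simp add: scaleR_scaleC cinner_scaleC_right)

lemma cinner_diff_left: "cinner (x - y) z = cinner x z - cinner y z"
  by (metis add_diff_cancel cinner_add_left diff_add_cancel)

lemma cinner_diff_right: "cinner x (y - z) = cinner x y - cinner x z"
  by (metis add_diff_cancel cinner_add_right diff_add_cancel)

lemma cinner_eq_zero_commute: "cinner x y = 0 \<longleftrightarrow> cinner y x = 0"
  by (metis cinner_commute complex_cnj_zero_iff)

lemma power2_norm_eq_cinner: "(norm x)\<^sup>2 = Re (cinner x x)"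
  by (simp add: norm_eq_sqrt_cinner cinner_self_nonneg)

lemma cinner_self: "cinner x x = of_real ((norm x)\<^sup>2)"
  by (simp add: power2_norm_eq_cinner complex_eq_iff cinner_self_real)

lemma cinner_ext: assumes "\<And>z. cinner z x = cinner z y" shows "x = y"
  using assms[of "x - y"] cinner_eq_zero_iff[of "x - y"] by (simp add: cinner_diff_right)

lemma power2_norm_diff: "(norm (x - y))\<^sup>2 = (norm x)\<^sup>2 - 2 * Re (cinner x y) + (norm y)\<^sup>2"
proof -
  have "cinner (x - y) (x - y) = cinner x x - cinner x y - cinner y x + cinner y y"
    by (simp add: cinner_diff_left cinner_diff_right)
  moreover have "Re (cinner y x) = Re (cinner x y)" by (subst cinner_commute) simp
  ultimately show ?thesis by (simp add: power2_norm_eq_cinner)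
qed

lemma power2_norm_add: "(norm (x + y))\<^sup>2 = (norm x)\<^sup>2 + 2 * Re (cinner x y) + (norm y)\<^sup>2"
  using power2_norm_diff[of x "- y"] cinner_diff_right[of x 0 y] by simp

lemma norm_scaleC: "norm (c *\<^sub>C x) = cmod c * norm x"
proof -
  have "cinner (c *\<^sub>C x) (c *\<^sub>C x) = (cnj c * c) * cinner x x"
    by (simp add: cinner_scaleC_left cinner_scaleC_right mult.assoc)
  also have "cnj c * c = of_real ((cmod c)\<^sup>2)"
    by (metis complex_norm_square mult.commute of_real_power)
  also have "\<dots> * cinner x x = of_real ((cmod c * norm x)\<^sup>2)"
    by (simp add: cinner_self power_mult_distrib)
  finally have "(norm (c *\<^sub>C x))\<^sup>2 = (cmod c * norm x)\<^sup>2" by (simp add: power2_norm_eq_cinner)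
  thus ?thesis by (simp add: power2_eq_iff_nonneg)
qed

lemma norm_cinner_le: "cmod (cinner x y) \<le> norm x * norm y"
proof (cases "y = 0")
  case True thus ?thesis by simp
next
  case False
  define c where "c = cinner x y"
  define s where "s = 1 / (norm y)\<^sup>2"
  have ny: "norm y > 0" using False by simp
  have s0: "s \<ge> 0" by (simp add: s_def)
  \<comment> \<open>(s cnj c) y is the projection of x onto the line through y.\<close>
  have "0 \<le> (norm (x - (of_real s * cnj c) *\<^sub>C y))\<^sup>2" by simp
  also have "\<dots> = (norm x)\<^sup>2 - 2 * Re (of_real s * cnj c * c) + (s * cmod c * norm y)\<^sup>2"
    using s0 by (simp add: power2_norm_diff cinner_scaleC_right norm_scaleC c_def norm_mult)
  also have "of_real s * cnj c * c = of_real (s * (cmod c)\<^sup>2)"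
    by (metis complex_norm_square mult.commute mult.assoc of_real_mult)
  also have "(s * cmod c * norm y)\<^sup>2 = s * (cmod c)\<^sup>2"
    using ny by (simp add: s_def power2_eq_square field_simps)
  finally have "(cmod c)\<^sup>2 \<le> (norm x)\<^sup>2 * (norm y)\<^sup>2" using ny by (simp add: s_def field_simps)
  thus ?thesis unfolding c_def by (simp add: power_mult_distrib[symmetric] power2_le_iff_abs_le)
qed

lemma bounded_linear_cinner_right: "bounded_linear (cinner a)"
proof
  show "cinner a (x + y) = cinner a x + cinner a y" for x y by (rule cinner_add_right)
  show "cinner a (r *\<^sub>R x) = r *\<^sub>R cinner a x" for r x
    by (simp add: cinner_scaleR_right scaleR_conv_of_real)
  show "\<exists>K. \<forall>x. norm (cinner a x) \<le> norm x * K"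
    using norm_cinner_le by (metis mult.commute)
qed

section \<open>Orthogonal projection onto closed subspaces\<close>

definition csubspace :: "'a::complex_inner set \<Rightarrow> bool" where
  "csubspace M \<longleftrightarrow> 0 \<in> M \<and> (\<forall>x\<in>M. \<forall>y\<in>M. x + y \<in> M) \<and> (\<forall>c. \<forall>x\<in>M. c *\<^sub>C x \<in> M)"

lemma csubspace_0: "csubspace M \<Longrightarrow> 0 \<in> M"
  by (simp add: csubspace_def)

lemma csubspace_add: "csubspace M \<Longrightarrow> x \<in> M \<Longrightarrow> y \<in> M \<Longrightarrow> x + y \<in> M"
  by (simp add: csubspace_def)

lemma csubspace_scaleC: "csubspace M \<Longrightarrow> x \<in> M \<Longrightarrow> c *\<^sub>C x \<in> M"
  by (simp add: csubspace_def)

lemma csubspace_scaleR: "csubspace M \<Longrightarrow> x \<in> M \<Longrightarrow> r *\<^sub>R x \<in> M"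
  by (simp add: csubspace_def scaleR_scaleC)

lemma csubspace_diff: "csubspace M \<Longrightarrow> x \<in> M \<Longrightarrow> y \<in> M \<Longrightarrow> x - y \<in> M"
  using csubspace_add[of M x "(-1) *\<^sub>R y"] csubspace_scaleR[of M y "-1"] by simp

lemma csubspace_UNIV: "csubspace UNIV"
  by (simp add: csubspace_def)

definition orthogonal_complement :: "'a::complex_inner set \<Rightarrow> 'a set" where
  "orthogonal_complement M = {x. \<forall>m\<in>M. cinner m x = 0}"

lemma orthogonal_complement_antimono:
  "M \<subseteq> N \<Longrightarrow> orthogonal_complement N \<subseteq> orthogonal_complement M"
  by (auto simp: orthogonal_complement_def)

lemma nearest_point_orthogonal:
  assumes M: "csubspace M" and p: "p \<in> M"
    and nearest: "\<forall>m\<in>M. (norm (x - p))\<^sup>2 \<le> (norm (x - m))\<^sup>2" and m: "m \<in> M"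
  shows "cinner (x - p) m = 0"
proof -
  define z where "z = x - p"
  define c where "c = cinner z m"
  define s where "s = 1 / ((norm m)\<^sup>2 + 1)"
  define t where "t = of_real s * cnj c"
  have m1: "(norm m)\<^sup>2 + 1 > 0" using zero_le_power2[of "norm m"] by linarith
  have s0: "s > 0" using m1 by (simp add: s_def)
  have s_small: "s * (norm m)\<^sup>2 < 1" using m1 by (simp add: s_def divide_less_eq)
  \<comment> \<open>Moving p to p + t m lowers the squared distance by 2 s |c|^2 - (s |c| |m|)^2,
    which is positive unless c = 0.\<close>
  have "p + t *\<^sub>C m \<in> M" using M p m by (simp add: csubspace_add csubspace_scaleC)
  hence "(norm z)\<^sup>2 \<le> (norm (z - t *\<^sub>C m))\<^sup>2" using nearest by (metis z_def diff_diff_eq)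
  also have "\<dots> = (norm z)\<^sup>2 - 2 * Re (t * c) + (s * cmod c * norm m)\<^sup>2"
    using s0 by (simp add: power2_norm_diff cinner_scaleC_right norm_scaleC c_def t_def norm_mult)
  also have "t * c = of_real (s * (cmod c)\<^sup>2)"
    unfolding t_def by (metis complex_norm_square mult.commute mult.assoc of_real_mult)
  finally have "2 * s * (cmod c)\<^sup>2 \<le> s * (s * (norm m)\<^sup>2) * (cmod c)\<^sup>2"
    by (simp add: power_mult_distrib power2_eq_square algebra_simps)
  hence "2 * (cmod c)\<^sup>2 \<le> (s * (norm m)\<^sup>2) * (cmod c)\<^sup>2" using s0 by (simp add: mult.assoc)
  also have "\<dots> \<le> (cmod c)\<^sup>2" using s_small s0 by (intro mult_left_le_one_le) auto
  finally show ?thesis by (simp add: c_def z_def)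
qed

lemma minimizing_sequence_Cauchy:
  assumes M: "csubspace M" and f: "\<And>n. f n \<in> M"
    and d: "\<And>m. m \<in> M \<Longrightarrow> d \<le> (norm (x - m))\<^sup>2"
    and fd: "\<And>n. (norm (x - f n))\<^sup>2 < d + inverse (real (Suc n))"
  shows "Cauchy f"
proof (rule metric_CauchyI)
  \<comment> \<open>Parallelogram law, with the midpoint of f k and f j as a competitor for d.\<close>
  have close: "(norm (f k - f j))\<^sup>2 \<le> 2 * inverse (real (Suc k)) + 2 * inverse (real (Suc j))" for k j
  proof -
    define a where "a = x - f k"
    define b where "b = x - f j"
    define mid where "mid = (1/2::real) *\<^sub>R (f k + f j)"
    have "mid \<in> M" unfolding mid_def using M f by (simp add: csubspace_add csubspace_scaleR)
    hence "4 * d \<le> 4 * (norm (x - mid))\<^sup>2" using d by simp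
    moreover have "a + b = 2 *\<^sub>R (x - mid)"
      by (simp add: a_def b_def mid_def algebra_simps scaleR_2)
    ultimately have "4 * d \<le> (norm (a + b))\<^sup>2" by (simp add: power_mult_distrib)
    moreover have "(norm (a + b))\<^sup>2 + (norm (f k - f j))\<^sup>2 = 2 * (norm a)\<^sup>2 + 2 * (norm b)\<^sup>2"
      using power2_norm_add[of a b] power2_norm_diff[of a b]
      by (simp add: a_def b_def norm_minus_commute)
    ultimately show ?thesis using fd[of k] fd[of j] by (simp add: a_def b_def)
  qed
  fix e :: real assume e: "e > 0"
  obtain N :: nat where "4 / e\<^sup>2 < real N" using reals_Archimedean2 by blast
  hence "4 < real N * e\<^sup>2" using e by (simp add: field_simps)
  also have "\<dots> \<le> real (Suc N) * e\<^sup>2" by (simp add: mult_right_mono)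
  finally have N': "4 * inverse (real (Suc N)) < e\<^sup>2" by (simp add: field_simps)
  show "\<exists>N. \<forall>m\<ge>N. \<forall>n\<ge>N. dist (f m) (f n) < e"
  proof (intro exI allI impI)
    fix m n assume "N \<le> m" "N \<le> n"
    hence "inverse (real (Suc m)) \<le> inverse (real (Suc N))"
      "inverse (real (Suc n)) \<le> inverse (real (Suc N))" by (simp_all add: field_simps)
    hence "(norm (f m - f n))\<^sup>2 < e\<^sup>2" using close[of m n] N' by linarith
    thus "dist (f m) (f n) < e" using e by (simp add: dist_norm power_less_imp_less_base)
  qed
qed

lemma nearest_point_exists:
  fixes M :: "'a::chilbert_space set"
  assumes cl: "closed M" and M: "csubspace M"
  shows "\<exists>p\<in>M. \<forall>m\<in>M. (norm (x - p))\<^sup>2 \<le> (norm (x - m))\<^sup>2"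
proof -
  define D where "D = (\<lambda>m. (norm (x - m))\<^sup>2) ` M"
  define d where "d = Inf D"
  have D_ne: "D \<noteq> {}" using csubspace_0[OF M] by (auto simp: D_def)
  have bdd: "bdd_below D" by (rule bdd_belowI[of _ 0]) (auto simp: D_def)
  have d_le: "d \<le> (norm (x - m))\<^sup>2" if "m \<in> M" for m
    unfolding d_def by (rule cInf_lower) (use that bdd in \<open>auto simp: D_def\<close>)
  have "\<exists>m\<in>M. (norm (x - m))\<^sup>2 < d + inverse (real (Suc n))" for n
  proof -
    have "Inf D < d + inverse (real (Suc n))" by (simp add: d_def)
    then obtain y where "y \<in> D" "y < d + inverse (real (Suc n))"
      using cInf_less_iff[OF D_ne bdd] by blast
    thus ?thesis by (auto simp: D_def)
  qed
  then obtain f where f: "\<And>n. f n \<in> M"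
    and fd: "\<And>n. (norm (x - f n))\<^sup>2 < d + inverse (real (Suc n))"
    by metis
  have "Cauchy f" by (rule minimizing_sequence_Cauchy[OF M f d_le fd])
  then obtain p where fp: "f \<longlonglongrightarrow> p" by (auto simp: Cauchy_convergent_iff convergent_def)
  have pM: "p \<in> M" using closed_sequentially[OF cl] f fp by blast
  have "(\<lambda>n. (norm (x - f n))\<^sup>2) \<longlonglongrightarrow> (norm (x - p))\<^sup>2"
    by (intro tendsto_intros fp)
  moreover have "(\<lambda>n. d + inverse (real (Suc n))) \<longlonglongrightarrow> d + 0"
    by (intro tendsto_intros LIMSEQ_inverse_real_of_nat)
  ultimately have p_le: "(norm (x - p))\<^sup>2 \<le> d + 0"
    by (rule LIMSEQ_le) (use fd less_imp_le in blast)
  show ?thesis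
  proof (intro bexI[OF _ pM] ballI)
    fix m assume "m \<in> M"
    show "(norm (x - p))\<^sup>2 \<le> (norm (x - m))\<^sup>2" using d_le[OF \<open>m \<in> M\<close>] p_le by linarith
  qed
qed

definition orthogonal_projection :: "'a::chilbert_space set \<Rightarrow> 'a \<Rightarrow> 'a" where
  "orthogonal_projection M x = (SOME p. p \<in> M \<and> (\<forall>m\<in>M. cinner (x - p) m = 0))"

context
  fixes M :: "'a::chilbert_space set"
  assumes cl: "closed M" and M: "csubspace M"
begin

lemma orthogonal_projection_props:
  "orthogonal_projection M x \<in> M \<and> (\<forall>m\<in>M. cinner (x - orthogonal_projection M x) m = 0)"
  unfolding orthogonal_projection_def
  by (rule someI_ex) (use nearest_point_exists[OF cl M] nearest_point_orthogonal[OF M] in blast)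

lemma orthogonal_projection_in: "orthogonal_projection M x \<in> M"
  using orthogonal_projection_props by blast

lemma orthogonal_projection_orth: "m \<in> M \<Longrightarrow> cinner (x - orthogonal_projection M x) m = 0"
  using orthogonal_projection_props by blast

lemma orthogonal_projection_orth': "m \<in> M \<Longrightarrow> cinner m (x - orthogonal_projection M x) = 0"
  using orthogonal_projection_orth cinner_eq_zero_commute by blast

lemma diff_orthogonal_projection_in_orthogonal_complement:
  "x - orthogonal_projection M x \<in> orthogonal_complement M"
  using orthogonal_projection_orth' by (auto simp: orthogonal_complement_def)

lemma orthogonal_projection_eqI:
  assumes p: "p \<in> M" and orth: "\<And>m. m \<in> M \<Longrightarrow> cinner (x - p) m = 0"
  shows "orthogonal_projection M x = p"
proof -
  define q where "q = orthogonal_projection M x"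
  have "p - q \<in> M" using M p orthogonal_projection_in by (simp add: q_def csubspace_diff)
  hence "cinner (x - q) (p - q) - cinner (x - p) (p - q) = 0"
    using orth orthogonal_projection_orth q_def by simp
  hence "cinner (p - q) (p - q) = 0" by (simp add: cinner_diff_left)
  thus ?thesis by (simp add: q_def cinner_eq_zero_iff)
qed

lemma orthogonal_projection_id: "x \<in> M \<Longrightarrow> orthogonal_projection M x = x"
  by (rule orthogonal_projection_eqI) auto

lemma orthogonal_projection_add:
  "orthogonal_projection M (x + y) = orthogonal_projection M x + orthogonal_projection M y"
proof (rule orthogonal_projection_eqI)
  show "orthogonal_projection M x + orthogonal_projection M y \<in> M"
    using M orthogonal_projection_in by (simp add: csubspace_add)
  fix m assume "m \<in> M"
  have e: "x + y - (orthogonal_projection M x + orthogonal_projection M y)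
      = (x - orthogonal_projection M x) + (y - orthogonal_projection M y)"
    by (simp add: algebra_simps)
  show "cinner (x + y - (orthogonal_projection M x + orthogonal_projection M y)) m = 0"
    using orthogonal_projection_orth[OF \<open>m \<in> M\<close>, of x] orthogonal_projection_orth[OF \<open>m \<in> M\<close>, of y]
    unfolding e cinner_add_left by simp
qed

lemma orthogonal_projection_scaleC:
  "orthogonal_projection M (c *\<^sub>C x) = c *\<^sub>C orthogonal_projection M x"
proof (rule orthogonal_projection_eqI)
  show "c *\<^sub>C orthogonal_projection M x \<in> M" using M orthogonal_projection_in by (simp add: csubspace_scaleC)
  show "cinner (c *\<^sub>C x - c *\<^sub>C orthogonal_projection M x) m = 0" if "m \<in> M" for m
    using orthogonal_projection_orth[OF that]
    by (simp add: scaleC_diff_right[symmetric] cinner_scaleC_left)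
qed

lemma norm_orthogonal_projection_le: "norm (orthogonal_projection M x) \<le> norm x"
proof -
  define p where "p = orthogonal_projection M x"
  have "cinner p (x - p) = 0" unfolding p_def
    by (rule orthogonal_projection_orth'[OF orthogonal_projection_in])
  hence "(norm x)\<^sup>2 = (norm p)\<^sup>2 + (norm (x - p))\<^sup>2" using power2_norm_add[of p "x - p"] by simp
  hence "(norm p)\<^sup>2 \<le> (norm x)\<^sup>2" by simp
  thus ?thesis unfolding p_def by (simp add: power2_le_iff_abs_le)
qed

lemma orthogonal_projection_self_adjoint:
  "cinner (orthogonal_projection M x) y = cinner x (orthogonal_projection M y)"
proof -
  let ?P = "orthogonal_projection M"
  have "cinner (?P x) y = cinner (?P x) (?P y) + cinner (?P x) (y - ?P y)"
    by (simp add: cinner_diff_right)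
  moreover have "cinner x (?P y) = cinner (?P x) (?P y) + cinner (x - ?P x) (?P y)"
    by (simp add: cinner_diff_left)
  ultimately show ?thesis
    using orthogonal_projection_orth[OF orthogonal_projection_in]
      orthogonal_projection_orth'[OF orthogonal_projection_in] by simp
qed

lemma orthogonal_complement_twice_subset:
  "orthogonal_complement (orthogonal_complement M) \<subseteq> M"
proof
  fix x assume x: "x \<in> orthogonal_complement (orthogonal_complement M)"
  define z where "z = x - orthogonal_projection M x"
  have "z \<in> orthogonal_complement M"
    unfolding z_def by (rule diff_orthogonal_projection_in_orthogonal_complement)
  hence "cinner z x = 0" and "cinner z (orthogonal_projection M x) = 0"
    using x orthogonal_projection_orth[OF orthogonal_projection_in]
    by (auto simp: orthogonal_complement_def z_def)
  hence "cinner z z = 0" by (simp add: z_def cinner_diff_right)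
  hence "x = orthogonal_projection M x" by (simp add: z_def cinner_eq_zero_iff)
  thus "x \<in> M" using orthogonal_projection_in by metis
qed

end

section \<open>Bounded operators and the adjoint\<close>

lemma bounded_clinear_add: "bounded_clinear T \<Longrightarrow> T (x + y) = T x + T y"
  by (simp add: bounded_clinear_def clinear_def)

lemma bounded_clinear_scaleC: "bounded_clinear T \<Longrightarrow> T (c *\<^sub>C x) = c *\<^sub>C T x"
  by (simp add: bounded_clinear_def clinear_def)

lemma bounded_clinear_bounded_linear: "bounded_clinear T \<Longrightarrow> bounded_linear T"
  by unfold_locales
    (auto simp: bounded_clinear_add bounded_clinear_scaleC scaleR_scaleC bounded_clinear_def)

lemma bounded_clinear_diff: "bounded_clinear T \<Longrightarrow> T (x - y) = T x - T y"
  using bounded_clinear_bounded_linear bounded_linear.linear linear_diff by blast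

lemma bounded_clinear_0: "bounded_clinear T \<Longrightarrow> T 0 = 0"
  using bounded_clinear_bounded_linear bounded_linear.linear linear_0 by blast

lemma bounded_clinear_compose:
  assumes S: "bounded_clinear S" and T: "bounded_clinear T"
  shows "bounded_clinear (S \<circ> T)"
proof -
  have "bounded_linear (S \<circ> T)"
    using bounded_linear_compose[OF S[THEN bounded_clinear_bounded_linear]
        T[THEN bounded_clinear_bounded_linear]]
    by (simp add: comp_def)
  moreover have "clinear (S \<circ> T)"
    using S T by (simp add: clinear_def bounded_clinear_add bounded_clinear_scaleC)
  ultimately show ?thesis
    unfolding bounded_clinear_def using bounded_linear.bounded by blast
qed

lemma csubspace_image:
  assumes T: "bounded_clinear T" and M: "csubspace M"
  shows "csubspace (T ` M)"
  unfolding csubspace_def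
proof (intro conjI ballI allI)
  show "0 \<in> T ` M" using csubspace_0[OF M] bounded_clinear_0[OF T] by (metis image_eqI)
  show "x + y \<in> T ` M" if "x \<in> T ` M" "y \<in> T ` M" for x y
    using that csubspace_add[OF M] by (auto simp: bounded_clinear_add[OF T, symmetric])
  show "c *\<^sub>C x \<in> T ` M" if "x \<in> T ` M" for c x
    using that csubspace_scaleC[OF M] by (auto simp: bounded_clinear_scaleC[OF T, symmetric])
qed

lemma csubspace_range: "bounded_clinear T \<Longrightarrow> csubspace (range T)"
  using csubspace_image[OF _ csubspace_UNIV] by blast

lemma csubspace_kernel: "bounded_clinear T \<Longrightarrow> csubspace (T -` {0})"
  by (simp add: csubspace_def bounded_clinear_0 bounded_clinear_add bounded_clinear_scaleC)

lemma closed_kernel: "bounded_clinear T \<Longrightarrow> closed (T -` {0})"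
  by (metis bounded_clinear_bounded_linear closed_singleton continuous_closed_vimage
      linear_continuous_at)

theorem riesz_representation:
  fixes f :: "'a::chilbert_space \<Rightarrow> complex"
  assumes f: "bounded_linear f" and scale: "\<And>c x. f (c *\<^sub>C x) = c * f x"
  shows "\<exists>y. \<forall>x. f x = cinner y x"
proof (cases "\<forall>x. f x = 0")
  case True thus ?thesis by (intro exI[of _ 0]) simp
next
  case False
  have lin: "linear f" using f by (rule bounded_linear.linear)
  let ?K = "f -` {0}"
  have cl: "closed ?K"
    using f by (intro continuous_closed_vimage) (auto intro: linear_continuous_at)
  have sub: "csubspace ?K"
    by (simp add: csubspace_def scale linear_0[OF lin] linear_add[OF lin])
  obtain z where z: "f z \<noteq> 0" using False by blast
  \<comment> \<open>The representing vector is a multiple of w, which is orthogonal to the kernel.\<close>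
  define w where "w = z - orthogonal_projection ?K z"
  have fw: "f w = f z"
    using orthogonal_projection_in[OF cl sub, of z] by (simp add: w_def linear_diff[OF lin])
  hence "w \<noteq> 0" using z linear_0[OF lin] by auto
  hence ww: "cinner w w \<noteq> 0" by (simp add: cinner_eq_zero_iff)
  have "f x = cinner (cnj (f w / cinner w w) *\<^sub>C w) x" for x
  proof -
    have "x - (f x / f w) *\<^sub>C w \<in> ?K"
      using z fw by (simp add: linear_diff[OF lin] scale)
    hence "cinner w (x - (f x / f w) *\<^sub>C w) = 0"
      unfolding w_def by (rule orthogonal_projection_orth[OF cl sub])
    hence "cinner w x = (f x / f w) * cinner w w" by (simp add: cinner_diff_right cinner_scaleC_right)
    thus ?thesis using z fw ww by (simp add: cinner_scaleC_left)
  qed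
  thus ?thesis by blast
qed

lemma adj_exists:
  fixes T :: "'a::chilbert_space \<Rightarrow> 'a"
  assumes T: "bounded_clinear T"
  shows "\<exists>S. \<forall>x y. cinner (T x) y = cinner x (S y)"
proof -
  have "\<exists>z. \<forall>x. cinner (T x) y = cinner x z" for y
  proof -
    have "bounded_linear (\<lambda>x. cinner y (T x))"
      using bounded_linear_compose[OF bounded_linear_cinner_right bounded_clinear_bounded_linear[OF T]]
      by simp
    then obtain z where "\<forall>x. cinner y (T x) = cinner z x"
      using riesz_representation[of "\<lambda>x. cinner y (T x)"]
      by (auto simp: bounded_clinear_scaleC[OF T] cinner_scaleC_right)
    thus ?thesis by (metis cinner_commute)
  qed
  thus ?thesis by metis
qed

lemma adj_eqI:
  assumes "\<And>x y. cinner (T x) y = cinner x (S y)"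
  shows "adj T = S"
  unfolding adj_def
proof (rule the_equality)
  show "\<forall>x y. cinner (T x) y = cinner x (S y)" using assms by blast
  fix S' assume S': "\<forall>x y. cinner (T x) y = cinner x (S' y)"
  show "S' = S"
  proof
    fix y show "S' y = S y" by (rule cinner_ext) (metis S' assms)
  qed
qed

lemma cinner_adj_right:
  fixes T :: "'a::chilbert_space \<Rightarrow> 'a"
  assumes "bounded_clinear T"
  shows "cinner (T x) y = cinner x (adj T y)"
  using adj_exists[OF assms] adj_eqI by metis

lemma cinner_adj_left:
  fixes T :: "'a::chilbert_space \<Rightarrow> 'a"
  assumes "bounded_clinear T"
  shows "cinner (adj T y) x = cinner y (T x)"
  by (metis cinner_adj_right[OF assms] cinner_commute)

lemma adj_eq_self_iff:
  fixes T :: "'a::chilbert_space \<Rightarrow> 'a"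
  assumes "bounded_clinear T"
  shows "adj T = T \<longleftrightarrow> (\<forall>x y. cinner (T x) y = cinner x (T y))"
  using adj_eqI cinner_adj_right[OF assms] by metis

lemma bounded_clinear_adj:
  fixes T :: "'a::chilbert_space \<Rightarrow> 'a"
  assumes T: "bounded_clinear T"
  shows "bounded_clinear (adj T)"
proof -
  have add: "adj T (a + b) = adj T a + adj T b" for a b
    by (rule cinner_ext) (simp add: cinner_adj_right[OF T, symmetric] cinner_add_right)
  have scale: "adj T (c *\<^sub>C a) = c *\<^sub>C adj T a" for c a
    by (rule cinner_ext) (simp add: cinner_adj_right[OF T, symmetric] cinner_scaleC_right)
  obtain K where K: "\<And>x. norm (T x) \<le> norm x * K" "K > 0"
    using bounded_linear.pos_bounded[OF bounded_clinear_bounded_linear[OF T]] by blast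
  have "norm (adj T y) \<le> norm y * K" for y
  proof (cases "adj T y = 0")
    case True thus ?thesis using K(2) by simp
  next
    case False
    have "(norm (adj T y))\<^sup>2 = Re (cinner (T (adj T y)) y)"
      by (simp add: power2_norm_eq_cinner cinner_adj_right[OF T])
    also have "\<dots> \<le> norm (T (adj T y)) * norm y"
      using complex_Re_le_cmod norm_cinner_le order_trans by blast
    also have "\<dots> \<le> norm (adj T y) * K * norm y" by (rule mult_right_mono[OF K(1)]) simp
    finally have "norm (adj T y) * norm (adj T y) \<le> norm (adj T y) * (norm y * K)"
      by (simp add: power2_eq_square algebra_simps)
    thus ?thesis using False by simp
  qed
  thus ?thesis unfolding bounded_clinear_def clinear_def using add scale by blast
qed

section \<open>Operators with closed range\<close>

lemma norm_bound_if_weakly_bounded_on_ball: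
  assumes r: "r > 0" and ball: "ball y0 r \<subseteq> {y. \<forall>w\<in>W. cmod (cinner w y) \<le> K}"
    and w: "w \<in> W"
  shows "norm w \<le> 4 * K / r"
proof -
  have "y0 \<in> ball y0 r" using r by simp
  hence bound0: "cmod (cinner w y0) \<le> K" using ball w by blast
  show ?thesis
  proof (cases "w = 0")
    case True
    thus ?thesis using bound0 r by simp
  next
    case False
    define s where "s = r / (2 * norm w)"
    have s0: "s > 0" using r False by (simp add: s_def)
    have "dist y0 (y0 + s *\<^sub>R w) = r / 2" using r False by (simp add: s_def dist_norm)
    hence "y0 + s *\<^sub>R w \<in> ball y0 r" using r by simp
    hence bound1: "cmod (cinner w (y0 + s *\<^sub>R w)) \<le> K" using ball w by blast
    have "cmod (cinner w (y0 + s *\<^sub>R w) - cinner w y0) = s * (norm w)\<^sup>2"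
      using s0 by (simp add: cinner_add_right cinner_scaleR_right cinner_self norm_mult norm_power)
    also have "\<dots> = r / 2 * norm w" using False by (simp add: s_def power2_eq_square)
    finally have "r / 2 * norm w \<le> 2 * K"
      using norm_triangle_ineq4[of "cinner w (y0 + s *\<^sub>R w)" "cinner w y0"] bound0 bound1
      by linarith
    thus ?thesis using r by (simp add: field_simps)
  qed
qed

theorem weakly_bounded_imp_bounded:
  fixes W :: "'a::chilbert_space set"
  assumes weak: "\<And>y. \<exists>K. \<forall>w\<in>W. cmod (cinner w y) \<le> K"
  shows "bounded W"
proof -
  define F where "F n = {y. \<forall>w\<in>W. cmod (cinner w y) \<le> real n}" for n :: nat
  have closed_F: "closed (F n)" for n
  proof -
    have "closed {y. cmod (cinner w y) \<le> real n}" for w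
      by (intro closed_Collect_le continuous_on_norm linear_continuous_on
          bounded_linear_cinner_right continuous_on_const)
    moreover have "F n = (\<Inter>w\<in>W. {y. cmod (cinner w y) \<le> real n})" by (auto simp: F_def)
    ultimately show ?thesis by (auto intro: closed_INT)
  qed
  have cover: "\<Union>(range F) = UNIV"
  proof -
    have "y \<in> \<Union>(range F)" for y
    proof -
      obtain K where "\<forall>w\<in>W. cmod (cinner w y) \<le> K" using weak by blast
      hence "\<forall>w\<in>W. cmod (cinner w y) \<le> real (nat \<lceil>K\<rceil>)"
        by (meson order_trans real_nat_ceiling_ge)
      hence "y \<in> F (nat \<lceil>K\<rceil>)" by (simp add: F_def)
      thus ?thesis by blast
    qed
    thus ?thesis by blast
  qed
  have "\<exists>n. interior (F n) \<noteq> {}"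
  proof (rule ccontr)
    assume "\<nexists>n. interior (F n) \<noteq> {}"
    hence "euclidean interior_of \<Union>(range F) = {}"
      by (intro Baire_category_alt) (auto simp: completely_metrizable_space_euclidean closed_F)
    thus False using cover by simp
  qed
  then obtain n y0 where "y0 \<in> interior (F n)" by blast
  then obtain r where r: "r > 0" "ball y0 r \<subseteq> F n" by (auto simp: mem_interior)
  hence "norm w \<le> 4 * real n / r" if "w \<in> W" for w
    using norm_bound_if_weakly_bounded_on_ball[OF r(1) _ that] by (simp add: F_def)
  thus ?thesis by (auto simp: bounded_iff)
qed

lemma adj_bounded_below_on_range:
  fixes T :: "'a::chilbert_space \<Rightarrow> 'a"
  assumes T: "bounded_clinear T" and cl: "closed (range T)"
  shows "\<exists>C. \<forall>w\<in>range T. norm w \<le> C * norm (adj T w)"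
proof -
  have R: "csubspace (range T)" by (rule csubspace_range[OF T])
  let ?W = "{w \<in> range T. norm (adj T w) \<le> 1}"
  have "bounded ?W"
  proof (rule weakly_bounded_imp_bounded)
    fix y
    obtain u where u: "orthogonal_projection (range T) y = T u"
      using orthogonal_projection_in[OF cl R, of y] by blast
    have "cmod (cinner w y) \<le> norm u" if w: "w \<in> ?W" for w
    proof -
      have "cinner w y = cinner w (orthogonal_projection (range T) y)"
        using orthogonal_projection_orth'[OF cl R, of w y] w by (simp add: cinner_diff_right)
      also have "\<dots> = cinner (adj T w) u" by (simp add: u cinner_adj_left[OF T])
      finally have "cmod (cinner w y) \<le> norm (adj T w) * norm u" using norm_cinner_le by metis
      also have "\<dots> \<le> norm u" using w by (simp add: mult_left_le_one_le)
      finally show ?thesis .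
    qed
    thus "\<exists>K. \<forall>w\<in>?W. cmod (cinner w y) \<le> K" by blast
  qed
  then obtain C where C: "\<And>w. w \<in> ?W \<Longrightarrow> norm w \<le> C" by (auto simp: bounded_iff)
  have "norm w \<le> C * norm (adj T w)" if w: "w \<in> range T" for w
  proof (cases "adj T w = 0")
    case True
    obtain u where "w = T u" using w by blast
    hence "cinner w w = 0" using True by (simp add: cinner_adj_left[OF T, symmetric])
    thus ?thesis by (simp add: cinner_eq_zero_iff bounded_clinear_0[OF bounded_clinear_adj[OF T]])
  next
    case False
    let ?a = "norm (adj T w)"
    have "adj T (inverse ?a *\<^sub>R w) = inverse ?a *\<^sub>R adj T w"
      using bounded_clinear_bounded_linear[OF bounded_clinear_adj[OF T]]
      by (simp add: linear_scale bounded_linear.linear)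
    hence "inverse ?a *\<^sub>R w \<in> ?W" using False csubspace_scaleR[OF R w] by simp
    hence "norm (inverse ?a *\<^sub>R w) \<le> C" by (rule C)
    hence "inverse ?a * norm w \<le> C" by simp
    thus ?thesis using False by (simp add: field_simps)
  qed
  thus ?thesis by blast
qed

lemma closed_image_if_bounded_below:
  fixes A :: "'a::chilbert_space \<Rightarrow> 'b::complex_inner"
  assumes A: "bounded_clinear A" and cl: "closed M" and M: "csubspace M"
    and bound: "\<forall>w\<in>M. norm w \<le> C * norm (A w)"
  shows "closed (A ` M)"
proof -
  have "subspace M"
    using csubspace_0[OF M] csubspace_add[OF M] csubspace_scaleR[OF M] by (simp add: subspace_def)
  moreover have "\<forall>w\<in>M. norm (A w) \<ge> inverse (max C 1) * norm w"
    using bound by (auto simp: field_simps intro: order_trans[OF _ mult_right_mono[OF max.cobounded1]])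
  ultimately have "complete (A ` M)"
    using complete_isometric_image[of "inverse (max C 1)" M A] A cl
    by (simp add: bounded_clinear_bounded_linear complete_eq_closed)
  thus ?thesis by (rule complete_imp_closed)
qed

lemma orthogonal_complement_kernel_subset_adj_image:
  fixes T :: "'a::chilbert_space \<Rightarrow> 'a"
  assumes T: "bounded_clinear T" and cl: "closed (range T)"
  shows "orthogonal_complement (T -` {0}) \<subseteq> adj T ` range T"
proof -
  obtain C where C: "\<forall>w\<in>range T. norm w \<le> C * norm (adj T w)"
    using adj_bounded_below_on_range[OF T cl] by blast
  let ?M = "adj T ` range T"
  have M: "csubspace ?M" by (rule csubspace_image[OF bounded_clinear_adj[OF T] csubspace_range[OF T]])
  have cl_M: "closed ?M"
    by (rule closed_image_if_bounded_below[OF bounded_clinear_adj[OF T] cl csubspace_range[OF T] C])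
  have "orthogonal_complement ?M \<subseteq> T -` {0}"
  proof
    fix z assume "z \<in> orthogonal_complement ?M"
    hence "cinner (adj T (T z)) z = 0" by (auto simp: orthogonal_complement_def)
    hence "cinner (T z) (T z) = 0" by (simp add: cinner_adj_left[OF T])
    thus "z \<in> T -` {0}" by (simp add: cinner_eq_zero_iff)
  qed
  thus ?thesis
    using orthogonal_complement_antimono orthogonal_complement_twice_subset[OF cl_M M] by blast
qed

lemma bounded_below_on_orthogonal_complement_kernel:
  fixes T :: "'a::chilbert_space \<Rightarrow> 'a"
  assumes T: "bounded_clinear T" and cl: "closed (range T)"
  shows "\<exists>C. \<forall>v\<in>orthogonal_complement (T -` {0}). norm v \<le> C * norm (T v)"
proof -
  obtain C where C: "\<forall>w\<in>range T. norm w \<le> C * norm (adj T w)"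
    using adj_bounded_below_on_range[OF T cl] by blast
  have "norm v \<le> C * norm (T v)" if v: "v \<in> orthogonal_complement (T -` {0})" for v
  proof -
    obtain w where w: "w \<in> range T" "v = adj T w"
      using v orthogonal_complement_kernel_subset_adj_image[OF T cl] by blast
    have "(norm v)\<^sup>2 = Re (cinner w (T v))"
      by (simp add: power2_norm_eq_cinner w(2) cinner_adj_left[OF T])
    also have "\<dots> \<le> norm w * norm (T v)"
      using complex_Re_le_cmod norm_cinner_le order_trans by blast
    also have "\<dots> \<le> C * norm v * norm (T v)"
      using C w(1) unfolding w(2) by (intro mult_right_mono) auto
    finally have "norm v * norm v \<le> norm v * (C * norm (T v))"
      by (simp add: power2_eq_square algebra_simps)
    thus ?thesis by (cases "v = 0") (simp_all add: bounded_clinear_0[OF T])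
  qed
  thus ?thesis by blast
qed

section \<open>The Moore-Penrose inverse\<close>

lemma inj_on_orthogonal_complement_kernel:
  assumes T: "bounded_clinear T"
  shows "inj_on T (orthogonal_complement (T -` {0}))"
proof
  fix x x' assume x: "x \<in> orthogonal_complement (T -` {0})"
    and x': "x' \<in> orthogonal_complement (T -` {0})" and eq: "T x = T x'"
  have "x - x' \<in> T -` {0}" using eq by (simp add: bounded_clinear_diff[OF T])
  hence "cinner (x - x') x = 0" "cinner (x - x') x' = 0"
    using x x' by (auto simp: orthogonal_complement_def)
  hence "cinner (x - x') (x - x') = 0" by (simp add: cinner_diff_right)
  thus "x = x'" by (simp add: cinner_eq_zero_iff)
qed

lemma adj_in_orthogonal_complement_kernel:
  fixes T :: "'a::chilbert_space \<Rightarrow> 'a"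
  assumes T: "bounded_clinear T"
  shows "adj T x \<in> orthogonal_complement (T -` {0})"
  by (auto simp: orthogonal_complement_def cinner_adj_right[OF T, symmetric])

definition mp_construction :: "('a::chilbert_space \<Rightarrow> 'a) \<Rightarrow> 'a \<Rightarrow> 'a" where
  "mp_construction T y =
    (SOME x. x \<in> orthogonal_complement (T -` {0}) \<and> T x = orthogonal_projection (range T) y)"

context
  fixes T :: "'a::chilbert_space \<Rightarrow> 'a"
  assumes T: "bounded_clinear T" and cl: "closed (range T)"
begin

private lemmas range_T = cl csubspace_range[OF T]
private lemmas kernel_T = closed_kernel[OF T] csubspace_kernel[OF T]

lemma mp_construction_spec:
  "mp_construction T y \<in> orthogonal_complement (T -` {0})
    \<and> T (mp_construction T y) = orthogonal_projection (range T) y"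
proof -
  let ?K = "T -` {0}"
  obtain u where u: "orthogonal_projection (range T) y = T u"
    using orthogonal_projection_in[OF range_T] by blast
  have "u - orthogonal_projection ?K u \<in> orthogonal_complement ?K"
    by (rule diff_orthogonal_projection_in_orthogonal_complement[OF kernel_T])
  moreover have "T (u - orthogonal_projection ?K u) = T u"
    using orthogonal_projection_in[OF kernel_T, of u] by (simp add: bounded_clinear_diff[OF T])
  ultimately have "\<exists>x. x \<in> orthogonal_complement ?K \<and> T x = orthogonal_projection (range T) y"
    using u by metis
  thus ?thesis unfolding mp_construction_def by (rule someI_ex)
qed

lemma mp_construction_eqI:
  assumes "x \<in> orthogonal_complement (T -` {0})" and "T x = orthogonal_projection (range T) y"
  shows "mp_construction T y = x"
proof -
  have "T (mp_construction T y) = T x" using mp_construction_spec[of y] assms(2) by simp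
  thus ?thesis
    using inj_onD[OF inj_on_orthogonal_complement_kernel[OF T]] mp_construction_spec[of y] assms(1)
    by blast
qed

lemma bounded_clinear_mp_construction: "bounded_clinear (mp_construction T)"
proof -
  let ?S = "mp_construction T"
  have add: "?S (y1 + y2) = ?S y1 + ?S y2" for y1 y2
    using mp_construction_spec[of y1] mp_construction_spec[of y2]
    by (intro mp_construction_eqI)
      (simp_all add: orthogonal_complement_def cinner_add_right bounded_clinear_add[OF T]
        orthogonal_projection_add[OF range_T])
  have scale: "?S (c *\<^sub>C y) = c *\<^sub>C ?S y" for c y
    using mp_construction_spec[of y]
    by (intro mp_construction_eqI)
      (simp_all add: orthogonal_complement_def cinner_scaleC_right bounded_clinear_scaleC[OF T]
        orthogonal_projection_scaleC[OF range_T])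
  obtain C where C: "\<forall>v\<in>orthogonal_complement (T -` {0}). norm v \<le> C * norm (T v)"
    using bounded_below_on_orthogonal_complement_kernel[OF T cl] by blast
  have "norm (?S y) \<le> norm y * max C 0" for y
  proof -
    have "norm (?S y) \<le> C * norm (orthogonal_projection (range T) y)"
      using C mp_construction_spec[of y] by metis
    also have "\<dots> \<le> max C 0 * norm y"
      using norm_orthogonal_projection_le[OF range_T, of y]
      by (intro mult_mono) auto
    finally show ?thesis by (simp add: mult.commute)
  qed
  thus ?thesis unfolding bounded_clinear_def clinear_def using add scale by blast
qed

lemma mp_construction_apply_self:
  "mp_construction T (T x) = x - orthogonal_projection (T -` {0}) x"
proof (rule mp_construction_eqI)
  show "x - orthogonal_projection (T -` {0}) x \<in> orthogonal_complement (T -` {0})"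
    by (rule diff_orthogonal_projection_in_orthogonal_complement[OF kernel_T])
  show "T (x - orthogonal_projection (T -` {0}) x) = orthogonal_projection (range T) (T x)"
    using orthogonal_projection_in[OF kernel_T, of x]
    by (simp add: bounded_clinear_diff[OF T] orthogonal_projection_id[OF range_T])
qed

lemma is_mp_inverse_mp_construction: "is_mp_inverse T (mp_construction T)"
  unfolding is_mp_inverse_def
proof (intro conjI)
  let ?S = "mp_construction T"
  show "bounded_clinear ?S" by (rule bounded_clinear_mp_construction)
  show "T \<circ> ?S \<circ> T = T"
    by (simp add: fun_eq_iff mp_construction_spec orthogonal_projection_id[OF range_T])
  have "?S (T (?S y)) = ?S y" for y
    by (rule mp_construction_eqI)
      (simp_all add: mp_construction_spec orthogonal_projection_in[OF range_T]
        orthogonal_projection_id[OF range_T])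
  thus "?S \<circ> T \<circ> ?S = ?S" by (simp add: fun_eq_iff)
  show "adj (?S \<circ> T) = ?S \<circ> T"
    by (rule adj_eqI) (simp add: mp_construction_apply_self cinner_diff_left cinner_diff_right
        orthogonal_projection_self_adjoint[OF kernel_T])
  show "adj (T \<circ> ?S) = T \<circ> ?S"
    by (rule adj_eqI) (simp add: mp_construction_spec orthogonal_projection_self_adjoint[OF range_T])
qed

lemma is_mp_inverse_unique:
  assumes S: "is_mp_inverse T S"
  shows "S = mp_construction T"
proof
  fix y
  have S_bcl: "bounded_clinear S" and TST: "\<And>u. T (S (T u)) = T u" and STS: "\<And>u. S (T (S u)) = S u"
    and adj_ST: "adj (S \<circ> T) = S \<circ> T" and adj_TS: "adj (T \<circ> S) = T \<circ> S"
    using S by (auto simp: is_mp_inverse_def fun_eq_iff)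
  have sym_ST: "cinner (S (T x)) w = cinner x (S (T w))" for x w
    using adj_ST adj_eq_self_iff[OF bounded_clinear_compose[OF S_bcl T]] by simp
  have sym_TS: "cinner (T (S x)) w = cinner x (T (S w))" for x w
    using adj_TS adj_eq_self_iff[OF bounded_clinear_compose[OF T S_bcl]] by simp
  show "S y = mp_construction T y"
  proof (rule mp_construction_eqI[symmetric])
    show "S y \<in> orthogonal_complement (T -` {0})"
    proof (clarsimp simp: orthogonal_complement_def)
      fix n assume "T n = 0"
      have "cinner n (S y) = cinner n (S (T (S y)))" by (simp add: STS)
      also have "\<dots> = cinner (S (T n)) (S y)" by (simp add: sym_ST)
      finally show "cinner n (S y) = 0" using \<open>T n = 0\<close> bounded_clinear_0[OF S_bcl] by simp
    qed
    show "T (S y) = orthogonal_projection (range T) y"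
    proof (rule orthogonal_projection_eqI[OF range_T, symmetric])
      fix m assume "m \<in> range T"
      then obtain u where u: "m = T u" by blast
      have "cinner (T (S y)) (T u) = cinner y (T u)" by (simp add: sym_TS TST)
      thus "cinner (y - T (S y)) m = 0" by (simp add: u cinner_diff_left)
    qed simp
  qed
qed

lemma mp_inverse_eq_mp_construction: "mp_inverse T = mp_construction T"
  unfolding mp_inverse_def
  by (rule the_equality) (auto intro: is_mp_inverse_mp_construction is_mp_inverse_unique)

lemma apply_mp_inverse_eq_projection:
  "T (mp_inverse T y) = orthogonal_projection (range T) y"
  by (simp add: mp_inverse_eq_mp_construction mp_construction_spec)

lemma mp_inverse_eqI:
  "x \<in> orthogonal_complement (T -` {0}) \<Longrightarrow> T x = orthogonal_projection (range T) y
    \<Longrightarrow> mp_inverse T y = x"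
  by (simp add: mp_inverse_eq_mp_construction mp_construction_eqI)

end

lemma quasi_normal_apply_adj_mp_inverse:
  fixes T :: "'a::chilbert_space \<Rightarrow> 'a"
  assumes T: "bounded_clinear T" and qn: "quasi_normal T" and cl: "closed (range T)"
  shows "T (adj T (mp_inverse T y)) = orthogonal_projection (range T) (adj T y)"
proof (rule orthogonal_projection_eqI[OF cl csubspace_range[OF T], symmetric])
  let ?P = "orthogonal_projection (range T)"
  let ?x = "mp_inverse T y"
  have qn': "T (adj T (T v)) = adj T (T (T v))" for v
    using qn by (simp add: quasi_normal_def fun_eq_iff)
  fix m assume "m \<in> range T"
  then obtain v where v: "m = T v" by blast
  have "cinner (adj T y) (T v) = cinner y (T (T v))" by (rule cinner_adj_left[OF T])
  also have "\<dots> = cinner (?P y) (T (T v))"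
    using orthogonal_projection_orth[OF cl csubspace_range[OF T], of "T (T v)" y]
    by (simp add: cinner_diff_left)
  also have "\<dots> = cinner ?x (adj T (T (T v)))"
    by (simp add: apply_mp_inverse_eq_projection[OF T cl, symmetric] cinner_adj_right[OF T])
  also have "\<dots> = cinner ?x (T (adj T (T v)))" by (simp add: qn')
  also have "\<dots> = cinner (T (adj T ?x)) (T v)"
    by (simp add: cinner_adj_left[OF T] cinner_adj_right[OF T])
  finally show "cinner (adj T y - T (adj T ?x)) m = 0" by (simp add: v cinner_diff_left)
qed simp

theorem mainTheorem5:
  fixes T :: "'a::chilbert_space \<Rightarrow> 'a"
  assumes "bounded_clinear T"
    and "quasi_normal T"
    and "closed (range T)"
  shows "SD T"
proof -
  have "mp_inverse T (adj T y) = adj T (mp_inverse T y)" for y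
    using assms
    by (intro mp_inverse_eqI adj_in_orthogonal_complement_kernel quasi_normal_apply_adj_mp_inverse)
  thus ?thesis unfolding SD_def using assms(3) by auto
qed

end
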